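(* Fix $-1<\alpha<0$ and a continuously differentiable $f:(0,\infty)\times\mathbb T\to\mathbb R$. Assume there is $T_1<\infty$ with $f(t,x)=0$ for $t\ge T_1$ and that $\|f\|_{C^1(\Omega_{0\bullet})}<\infty$. Let $f_n(t,x)=f(t,x)\varphi_n(t)$, $n\in\mathbb N_0$ (extended by $0$ for $t\le0$). Then there exists a finite constant $C_0$, independent of $\alpha$ and $f$, such that $$|X(f_n)|\le C_0\,2^{-n(1+\alpha)}\,\|f\|_{C^1(\Omega_{0\bullet})}\,\|X\|_{C^\alpha([-1,2]\times\mathbb T)}$$ for all $X\in C^\alpha$ and $n\in\mathbb N_0$.
   Context: $\mathbb T=[-1/2,1/2)$; on $\mathbb R\times\mathbb T$, $d((t,x),(t',x'))=|t-t'|+d_{\mathbb T}(x,x')$, $\mathbb B(z,a)$ the open ball. $\Omega_{0\bullet}=(0,\infty)\times\mathbb T$ and $\|f\|_{C^1(\Omega_{0\bullet})}=\|f\|_{L^\infty(\Omega_{0\bullet})}+\|\partial_tf\|_{L^\infty(\Omega_{0\bullet})}+\|\partial_xf\|_{L^\infty(\Omega_{0\bullet})}$. $\varphi:\mathbb R_+\to[0,1]$ is a smooth function with $\varphi(r)=0$ for $r\notin(1/16,1/4)$ and $\sum_{n\in\mathbb Z}\varphi(2^nr)=1$ for $r>0$; $\varphi_n(r)=\varphi(2^nr)$. For $-1<\alpha<0$: $B_1$ is the set of $g\in C^1_c(\mathbb R\times\mathbb T)$ supported in $\mathbb B(0,1/4)$ with $\|g\|_\infty+\|\partial_tg\|_\infty+\|\partial_xg\|_\infty\le1$;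 $(S^\delta_zg)(w)=\delta^{-2}g((w-z)/\delta)$ on $\mathbb B(z,\delta)$, $0$ otherwise; for a linear functional $X$ on $C^1_c(\mathbb R\times\mathbb T)$, $\|X\|_{C^\alpha([S,T]\times\mathbb T)}=\sup_{\delta\in(0,1]}\sup_{z\in[S,T]\times\mathbb T}\sup_{g\in B_1}\delta^{-\alpha}|X(S^\delta_zg)|$; $C^\alpha$ is the set of $X$ with this finite for all $S<T$. *)

theory Defs
  imports "HOL-Analysis.Analysis"
begin

(* Points of R x T are pairs (t,x) :: real * real; functions on R x T are
   functions real * real => real that are 1-periodic in x.  T = [-1/2,1/2). *)

definition trep :: "real \<Rightarrow> real" where
  "trep u = u - of_int \<lfloor>u + 1/2\<rfloor>"

definition dT :: "real \<Rightarrow> real \<Rightarrow> real" where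
  "dT x y = \<bar>trep (x - y)\<bar>"

definition dRT :: "real \<times> real \<Rightarrow> real \<times> real \<Rightarrow> real" where
  "dRT z w = \<bar>fst z - fst w\<bar> + dT (snd z) (snd w)"

definition ballRT :: "real \<times> real \<Rightarrow> real \<Rightarrow> (real \<times> real) set" where
  "ballRT z a = {w. dRT z w < a}"

definition periodic_x :: "(real \<times> real \<Rightarrow> real) \<Rightarrow> bool" where
  "periodic_x f \<longleftrightarrow> (\<forall>t x. f (t, x + 1) = f (t, x))"

definition pdt :: "(real \<times> real \<Rightarrow> real) \<Rightarrow> real \<times> real \<Rightarrow> real" where
  "pdt f z = frechet_derivative f (at z) (1, 0)"

definition pdx :: "(real \<times> real \<Rightarrow> real) \<Rightarrow> real \<times> real \<Rightarrow> real" where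
  "pdx f z = frechet_derivative f (at z) (0, 1)"

definition C1_on :: "(real \<times> real) set \<Rightarrow> (real \<times> real \<Rightarrow> real) \<Rightarrow> bool" where
  "C1_on S f \<longleftrightarrow> (\<forall>z\<in>S. f differentiable (at z)) \<and>
      continuous_on S (pdt f) \<and> continuous_on S (pdx f)"

definition C1c :: "(real \<times> real \<Rightarrow> real) \<Rightarrow> bool" where
  "C1c g \<longleftrightarrow> periodic_x g \<and> C1_on UNIV g \<and> (\<exists>K. \<forall>t x. \<bar>t\<bar> > K \<longrightarrow> g (t, x) = 0)"

definition supnorm :: "(real \<times> real) set \<Rightarrow> (real \<times> real \<Rightarrow> real) \<Rightarrow> real" where
  "supnorm S f = (SUP z\<in>S. \<bar>f z\<bar>)"

definition Omega0 :: "(real \<times> real) set" where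
  "Omega0 = {0<..} \<times> {-1/2..<1/2}"

definition C1norm_Omega0 :: "(real \<times> real \<Rightarrow> real) \<Rightarrow> real" where
  "C1norm_Omega0 f = supnorm Omega0 f + supnorm Omega0 (pdt f) + supnorm Omega0 (pdx f)"

definition B1 :: "(real \<times> real \<Rightarrow> real) set" where
  "B1 = {g. C1c g \<and> (\<forall>w. g w \<noteq> 0 \<longrightarrow> w \<in> ballRT (0, 0) (1/4)) \<and>
            supnorm UNIV g + supnorm UNIV (pdt g) + supnorm UNIV (pdx g) \<le> 1}"

definition chart :: "(real \<times> real \<Rightarrow> real) \<Rightarrow> real \<times> real \<Rightarrow> real" where
  "chart g w = (if -1/2 \<le> snd w \<and> snd w < 1/2 then g w else 0)"

definition scaleS :: "real \<Rightarrow> real \<times> real \<Rightarrow> (real \<times> real \<Rightarrow> real) \<Rightarrow> real \<times> real \<Rightarrow> real" where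
  "scaleS \<delta> z g w = (if w \<in> ballRT z \<delta>
      then \<delta> powr (-2) * chart g ((fst w - fst z) / \<delta>, trep (snd w - snd z) / \<delta>)
      else 0)"

definition linear_C1c :: "((real \<times> real \<Rightarrow> real) \<Rightarrow> real) \<Rightarrow> bool" where
  "linear_C1c X \<longleftrightarrow> (\<forall>f g a b. C1c f \<longrightarrow> C1c g \<longrightarrow>
      X (\<lambda>w. a * f w + b * g w) = a * X f + b * X g)"

definition holder_vals :: "real \<Rightarrow> ((real \<times> real \<Rightarrow> real) \<Rightarrow> real) \<Rightarrow> real \<Rightarrow> real \<Rightarrow> real set" where
  "holder_vals \<alpha> X S T = {\<delta> powr (-\<alpha>) * \<bar>X (scaleS \<delta> z g)\<bar> | \<delta> z g.
      \<delta> \<in> {0<..1} \<and> z \<in> {S..T} \<times> {-1/2..<1/2} \<and> g \<in> B1}"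

definition holder_norm :: "real \<Rightarrow> ((real \<times> real \<Rightarrow> real) \<Rightarrow> real) \<Rightarrow> real \<Rightarrow> real \<Rightarrow> real" where
  "holder_norm \<alpha> X S T = Sup (holder_vals \<alpha> X S T)"

definition Calpha :: "real \<Rightarrow> ((real \<times> real \<Rightarrow> real) \<Rightarrow> real) set" where
  "Calpha \<alpha> = {X. linear_C1c X \<and> (\<forall>S T. S < T \<longrightarrow> bdd_above (holder_vals \<alpha> X S T))}"

definition smooth_on :: "real set \<Rightarrow> (real \<Rightarrow> real) \<Rightarrow> bool" where
  "smooth_on S h \<longleftrightarrow> (\<forall>k. \<forall>r\<in>S. ((deriv ^^ k) h) differentiable (at r))"

end

theory Submission
  imports Defs
begin

(* Since phi vanishes off (1/16, 1/4), f_n lives in the strip 2^-n/16 < t < 2^-n/4.  The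
   M = 2^(n+3) bumps cos^2 (pi M trep (x - x_j) / 2) form a partition of unity of the circle and
   cut f_n into M pieces of width about 2^-n in x.  Each piece equals c^2 kappa S^delta_z g with
   c = 2^n, delta = 1/c, z = (5 delta / 32, x_j), g in B_1 and kappa = 1 / ((17 + sup |phi'|) |f|_C1):
   the factor c produced by differentiating phi (c t) is absorbed by the rescaling.  The Hoelder bound
   |X (S^delta_z g)| <= delta^alpha |X| then gives |X (piece)| <= delta^(2 + alpha) |X| / kappa, and
   summing the M = 8/delta pieces leaves delta^(1 + alpha) = 2^(-n (1 + alpha)). *)

lemma trep_bounds: "-1/2 \<le> trep u \<and> trep u < 1/2"
  unfolding trep_def by linarith

lemma trep_unique:
  assumes "-1/2 \<le> v" "v < 1/2" "u = v + of_int k"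
  shows "trep u = v"
proof -
  have "\<lfloor>u + 1/2\<rfloor> = k" using assms by (simp add: floor_eq_iff)
  then show ?thesis using assms unfolding trep_def by simp
qed

lemma trep_add_1: "trep (u + 1) = trep u"
  by (rule trep_unique[of _ _ "\<lfloor>u + 1/2\<rfloor> + 1"]) (use trep_bounds[of u] in \<open>auto simp: trep_def\<close>)

lemma trep_id: "-1/2 \<le> v \<Longrightarrow> v < 1/2 \<Longrightarrow> trep v = v"
  by (rule trep_unique[of _ _ 0]) auto

lemma abs_trep_uminus: "\<bar>trep (- u)\<bar> = \<bar>trep u\<bar>"
proof (cases "trep u = -1/2")
  case True
  have "trep (-u) = -1/2"
    by (rule trep_unique[of _ _ "1 - \<lfloor>u + 1/2\<rfloor>"]) (use True in \<open>auto simp: trep_def\<close>)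
  then show ?thesis using True by simp
next
  case False
  have "trep (-u) = - trep u"
  proof (rule trep_unique[of _ _ "- \<lfloor>u + 1/2\<rfloor>"])
    show "-1/2 \<le> - trep u" "- trep u < 1/2" using False trep_bounds[of u] by auto
  qed (simp add: trep_def)
  then show ?thesis by simp
qed

lemma dRT_eq: "dRT z w = \<bar>fst z - fst w\<bar> + \<bar>trep (snd w - snd z)\<bar>"
  unfolding dRT_def dT_def using abs_trep_uminus[of "snd w - snd z"] by simp

lemma trep_near:
  assumes "\<bar>u - u0\<bar> < 1/4"
  shows "trep u = u - of_int \<lfloor>u0 + 1/2\<rfloor> \<or>
    (1/4 \<le> \<bar>trep u\<bar> \<and> 1/4 \<le> \<bar>u - of_int \<lfloor>u0 + 1/2\<rfloor>\<bar> \<and> \<bar>u - of_int \<lfloor>u0 + 1/2\<rfloor>\<bar> \<le> 3/4)"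
proof -
  define k where "k = \<lfloor>u0 + 1/2\<rfloor>"
  define k' where "k' = \<lfloor>u + 1/2\<rfloor>"
  have k: "of_int k \<le> u0 + 1/2" "u0 + 1/2 < of_int k + 1" unfolding k_def by linarith+
  have k': "of_int k' \<le> u + 1/2" "u + 1/2 < of_int k' + 1" unfolding k'_def by linarith+
  have "k' < k + 2" "k - 2 < k'"
    using k k' assms by linarith+
  then have "k' = k \<or> k' = k + 1 \<or> k' = k - 1" by linarith
  moreover have "trep u = u - of_int k'" unfolding trep_def k'_def by simp
  ultimately show ?thesis unfolding k_def[symmetric] using k k' assms by auto
qed

definition has_partials :: "(real \<times> real \<Rightarrow> real) \<Rightarrow> real \<Rightarrow> real \<Rightarrow> real \<times> real \<Rightarrow> bool" where
  "has_partials B b1 b2 z \<longleftrightarrow> (B has_derivative (\<lambda>d. fst d * b1 + snd d * b2)) (at z)"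

lemma has_partials_imp_pd:
  assumes "has_partials B b1 b2 z"
  shows "pdt B z = b1" "pdx B z = b2"
proof -
  have "frechet_derivative B (at z) = (\<lambda>d. fst d * b1 + snd d * b2)"
    using assms unfolding has_partials_def by (metis frechet_derivative_at)
  then show "pdt B z = b1" "pdx B z = b2" unfolding pdt_def pdx_def by simp_all
qed

lemma has_partials_imp_differentiable: "has_partials B b1 b2 z \<Longrightarrow> B differentiable (at z)"
  unfolding has_partials_def by (rule differentiableI)

lemma differentiable_imp_has_partials:
  assumes "B differentiable (at z)"
  shows "has_partials B (pdt B z) (pdx B z) z"
proof -
  let ?L = "frechet_derivative B (at z)"
  have deriv: "(B has_derivative ?L) (at z)" using assms frechet_derivative_works by blast
  then have "linear ?L" by (rule has_derivative_linear)
  then have "?L d = fst d * ?L (1, 0) + snd d * ?L (0, 1)" for d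
    using linear_add[of ?L "(fst d, 0)" "(0, snd d)"]
      linear_scale[of ?L "fst d" "(1, 0)"] linear_scale[of ?L "snd d" "(0, 1)"]
    by (cases d) simp
  then have L: "?L = (\<lambda>d. fst d * pdt B z + snd d * pdx B z)"
    unfolding pdt_def pdx_def by (rule ext)
  from deriv show ?thesis unfolding has_partials_def by (simp only: L)
qed

lemma has_partials_const: "has_partials (\<lambda>w. c) 0 0 z"
  unfolding has_partials_def by simp

lemma has_partials_add:
  "has_partials A a1 a2 z \<Longrightarrow> has_partials B b1 b2 z \<Longrightarrow>
   has_partials (\<lambda>w. A w + B w) (a1 + b1) (a2 + b2) z"
  unfolding has_partials_def by (drule (1) has_derivative_add) (simp add: algebra_simps)

lemma has_partials_mult:
  "has_partials A a1 a2 z \<Longrightarrow> has_partials B b1 b2 z \<Longrightarrow>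
   has_partials (\<lambda>w. A w * B w) (A z * b1 + a1 * B z) (A z * b2 + a2 * B z) z"
  unfolding has_partials_def by (drule (1) has_derivative_mult) (simp add: algebra_simps)

lemma has_partials_cmult: "has_partials B b1 b2 z \<Longrightarrow> has_partials (\<lambda>w. c * B w) (c * b1) (c * b2) z"
  using has_partials_mult[OF has_partials_const, of B b1 b2 z c] by simp

lemma has_partials_fst:
  assumes "(g has_real_derivative g') (at (fst z))"
  shows "has_partials (\<lambda>w. g (fst w)) g' 0 z"
  using has_derivative_compose[OF has_derivative_fst[OF has_derivative_ident]
      has_field_derivative_imp_has_derivative[OF assms]]
  unfolding has_partials_def by (simp add: mult.commute)

lemma has_partials_snd:
  assumes "(g has_real_derivative g') (at (snd z))"
  shows "has_partials (\<lambda>w. g (snd w)) 0 g' z"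
  using has_derivative_compose[OF has_derivative_snd[OF has_derivative_ident]
      has_field_derivative_imp_has_derivative[OF assms]]
  unfolding has_partials_def by (simp add: mult.commute)

lemma has_partials_affine:
  assumes "has_partials B b1 b2 (p + q * a, r + s * v)"
  shows "has_partials (\<lambda>w. B (p + q * fst w, r + s * snd w)) (q * b1) (s * b2) (a, v)"
proof -
  let ?A = "\<lambda>w. (p + q * fst w, r + s * snd w)"
  have "(?A has_derivative (\<lambda>d. (q * fst d, s * snd d))) (at (a, v))"
    by (auto intro!: derivative_eq_intros)
  moreover have "(B has_derivative (\<lambda>d. fst d * b1 + snd d * b2)) (at (?A (a, v)))"
    using assms by (simp add: has_partials_def)
  ultimately show ?thesis
    unfolding has_partials_def by (auto dest: has_derivative_compose simp: algebra_simps)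
qed

lemma has_partials_transform:
  assumes "has_partials B b1 b2 z" "eventually (\<lambda>w. B w = C w) (nhds z)"
  shows "has_partials C b1 b2 z"
  unfolding has_partials_def
proof (rule has_derivative_transform_eventually)
  show "(B has_derivative (\<lambda>d. fst d * b1 + snd d * b2)) (at z within UNIV)"
    using assms(1) unfolding has_partials_def by simp
  show "\<forall>\<^sub>F w in at z within UNIV. B w = C w"
    using assms(2) unfolding eventually_at_filter by (rule eventually_mono) simp
  show "B z = C z" using assms(2) by (rule eventually_nhds_x_imp_x)
qed simp

lemma C1_onI:
  assumes "\<And>z. z \<in> S \<Longrightarrow> has_partials B (b1 z) (b2 z) z" "continuous_on S b1" "continuous_on S b2"
  shows "C1_on S B"
proof -
  have "continuous_on S (pdt B)" "continuous_on S (pdx B)"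
    using assms(2,3) has_partials_imp_pd[OF assms(1)] by (metis (no_types, lifting) continuous_on_cong)+
  then show ?thesis unfolding C1_on_def using has_partials_imp_differentiable assms(1) by blast
qed

section \<open>Wrapping functions around the circle\<close>

text \<open>The seam of \<open>trep\<close> at \<open>\<plusminus>1/2\<close> falls where \<open>B\<close> vanishes, so that near every point
  \<open>periodize B x0\<close> is a translate of \<open>B\<close> and inherits its smoothness.\<close>

definition vanishes_on_band :: "(real \<times> real \<Rightarrow> real) \<Rightarrow> bool" where
  "vanishes_on_band B \<longleftrightarrow> (\<forall>a v. 1/4 \<le> \<bar>v\<bar> \<longrightarrow> \<bar>v\<bar> \<le> 3/4 \<longrightarrow> B (a, v) = 0)"

definition periodize :: "(real \<times> real \<Rightarrow> real) \<Rightarrow> real \<Rightarrow> real \<times> real \<Rightarrow> real" where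
  "periodize B x0 w = B (fst w, trep (snd w - x0))"

lemma periodic_x_periodize: "periodic_x (periodize B x0)"
proof -
  have "trep (x + 1 - x0) = trep (x - x0)" for x using trep_add_1[of "x - x0"] by (simp add: algebra_simps)
  then show ?thesis unfolding periodic_x_def periodize_def by simp
qed

lemma eventually_nhds_snd_near:
  fixes z :: "real \<times> real"
  assumes "e > 0"
  shows "eventually (\<lambda>w. \<bar>snd w - snd z\<bar> < e) (nhds z)"
proof -
  have "open {w :: real \<times> real. \<bar>snd w - snd z\<bar> < e}"
    by (intro open_Collect_less continuous_intros)
  from eventually_nhds_in_open[OF this] show ?thesis using assms by simp
qed

lemma periodize_eventually_eq_shift:
  assumes "vanishes_on_band B"
  shows "eventually (\<lambda>w. periodize B x0 w = B (fst w, snd w - x0 - of_int \<lfloor>snd z - x0 + 1/2\<rfloor>)) (nhds z)"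
proof -
  have "eventually (\<lambda>w. \<bar>snd w - snd z\<bar> < 1/4) (nhds z)" by (rule eventually_nhds_snd_near) simp
  then show ?thesis
  proof (rule eventually_mono)
    fix w :: "real \<times> real"
    let ?k = "\<lfloor>snd z - x0 + 1/2\<rfloor>"
    assume "\<bar>snd w - snd z\<bar> < 1/4"
    then have "\<bar>(snd w - x0) - (snd z - x0)\<bar> < 1/4" by simp
    from trep_near[OF this] show "periodize B x0 w = B (fst w, snd w - x0 - of_int ?k)"
    proof
      assume "1/4 \<le> \<bar>trep (snd w - x0)\<bar> \<and> 1/4 \<le> \<bar>snd w - x0 - of_int ?k\<bar> \<and>
        \<bar>snd w - x0 - of_int ?k\<bar> \<le> 3/4"
      moreover have "\<bar>trep (snd w - x0)\<bar> \<le> 3/4" using trep_bounds[of "snd w - x0"] by auto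
      ultimately show ?thesis using assms unfolding vanishes_on_band_def periodize_def by auto
    qed (simp add: periodize_def)
  qed
qed

lemma has_partials_periodize:
  assumes B: "\<And>w. has_partials B (Bt w) (Bx w) w"
    and band: "vanishes_on_band B" "vanishes_on_band Bt" "vanishes_on_band Bx"
  shows "has_partials (periodize B x0) (periodize Bt x0 z) (periodize Bx x0 z) z"
proof -
  obtain a u where z: "z = (a, u)" by (cases z)
  define k where "k = \<lfloor>u - x0 + 1/2\<rfloor>"
  have "has_partials (\<lambda>w. B (0 + 1 * fst w, (- x0 - of_int k) + 1 * snd w))
      (1 * Bt (a, u - x0 - of_int k)) (1 * Bx (a, u - x0 - of_int k)) (a, u)"
    by (rule has_partials_affine) (use B[of "(a, u - x0 - of_int k)"] in \<open>simp add: algebra_simps\<close>)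
  moreover have "Bt (a, u - x0 - of_int k) = periodize Bt x0 z"
    "Bx (a, u - x0 - of_int k) = periodize Bx x0 z"
    using periodize_eventually_eq_shift[OF band(2), of x0 z, THEN eventually_nhds_x_imp_x]
      periodize_eventually_eq_shift[OF band(3), of x0 z, THEN eventually_nhds_x_imp_x]
    unfolding z k_def by simp_all
  ultimately have "has_partials (\<lambda>w. B (fst w, snd w - x0 - of_int k))
      (periodize Bt x0 z) (periodize Bx x0 z) z"
    unfolding z by (simp add: algebra_simps)
  then show ?thesis
    by (rule has_partials_transform)
      (use periodize_eventually_eq_shift[OF band(1), of x0 z] in \<open>simp add: z k_def eq_commute\<close>)
qed

lemma continuous_on_periodize:
  assumes "continuous_on UNIV B" "vanishes_on_band B"
  shows "continuous_on UNIV (periodize B x0)"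
proof (rule continuous_at_imp_continuous_on, intro ballI)
  fix z :: "real \<times> real"
  have "isCont (\<lambda>w. B (fst w, snd w - x0 - of_int \<lfloor>snd z - x0 + 1/2\<rfloor>)) z"
    by (intro continuous_on_interior[OF assms(1)] continuous_intros isCont_o2[where g=B]) auto
  then show "isCont (periodize B x0) z"
    using isCont_cong[OF periodize_eventually_eq_shift[OF assms(2)]] by simp
qed

lemma C1_on_periodize:
  assumes "\<And>w. has_partials B (Bt w) (Bx w) w"
    and "vanishes_on_band B" "vanishes_on_band Bt" "vanishes_on_band Bx"
    and "continuous_on UNIV Bt" "continuous_on UNIV Bx"
  shows "C1_on UNIV (periodize B x0)"
  by (rule C1_onI[of UNIV _ "periodize Bt x0" "periodize Bx x0"])
    (use assms in \<open>auto intro: has_partials_periodize continuous_on_periodize\<close>)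

section \<open>A smooth partition of unity on the circle\<close>

text \<open>Writing the \<open>cos\<^sup>2\<close> bump on \<open>(-1, 1)\<close> through a clamp makes the continuity of the bump
  and of its derivative immediate.\<close>

definition clamp1 :: "real \<Rightarrow> real" where
  "clamp1 u = max (-1) (min 1 u)"

definition bump :: "real \<Rightarrow> real" where
  "bump u = cos (pi * clamp1 u / 2) ^ 2"

definition bump' :: "real \<Rightarrow> real" where
  "bump' u = - (pi / 2) * sin (pi * clamp1 u)"

lemma bump_eq: "bump u = (if u \<in> {-1<..<1} then cos (pi * u / 2) ^ 2 else 0)"
  unfolding bump_def clamp1_def by (auto simp: max_def min_def)

lemma bump'_eq: "bump' u = (if u \<in> {-1<..<1} then - (pi / 2) * sin (pi * u) else 0)"
  unfolding bump'_def clamp1_def by (auto simp: max_def min_def)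

lemma bump_eq_0: "1 \<le> \<bar>u\<bar> \<Longrightarrow> bump u = 0 \<and> bump' u = 0"
  unfolding bump_eq bump'_eq by auto

lemma bump_bounds: "0 \<le> bump u" "bump u \<le> 1" "\<bar>bump' u\<bar> \<le> 2"
proof -
  show "0 \<le> bump u" unfolding bump_def by simp
  show "bump u \<le> 1" unfolding bump_def by (simp add: cos_squared_eq)
  have "pi / 2 * \<bar>sin (pi * clamp1 u)\<bar> \<le> 2 * 1"
    using pi_less_4 abs_sin_le_one by (intro mult_mono) auto
  then show "\<bar>bump' u\<bar> \<le> 2" unfolding bump'_def by (simp add: abs_mult)
qed

lemma continuous_on_bump: "continuous_on UNIV bump" "continuous_on UNIV bump'"
  unfolding bump_def bump'_def clamp1_def by (auto intro!: continuous_intros)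

lemma has_real_derivative_bump: "(bump has_real_derivative bump' x) (at x)"
proof -
  let ?S = "{-1<..<1::real}" and ?T = "- {-1<..<1::real}"
  let ?f = "\<lambda>u::real. cos (pi * u / 2) ^ 2" and ?f' = "\<lambda>x d::real. (- (pi / 2) * sin (pi * x)) * d"
  have f: "(?f has_derivative ?f' y) (at y within A)" for y A
  proof -
    have e: "- (pi / 2) * sin (pi * y) = 2 * cos (pi * y / 2) * (- sin (pi * y / 2) * (pi / 2))"
      using sin_double[of "pi * y / 2"] by (simp add: algebra_simps)
    have "(?f has_real_derivative (- (pi / 2) * sin (pi * y))) (at y within A)"
      unfolding e by (auto intro!: derivative_eq_intros)
    then show ?thesis unfolding has_field_derivative_def .
  qed
  have "closed {u::real. 1 \<le> \<bar>u\<bar>}" by (rule closed_Collect_le) (intro continuous_intros)+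
  then have "closure ?T \<subseteq> {u. 1 \<le> \<bar>u\<bar>}" by (intro closure_minimal) auto
  then have boundary: "u = 1 \<or> u = -1" if "u \<in> closure ?S" "u \<in> closure ?T" for u
    using that by force
  have "((\<lambda>u. if u \<in> ?S then ?f u else 0) has_derivative (if x \<in> ?S then ?f' x else (\<lambda>d. 0)))
      (at x within ?S \<union> ?T)"
  proof (rule has_derivative_If_within_closures)
    show "?f u = 0" "?f' u = (\<lambda>d. 0)" if "u \<in> closure ?S" "u \<in> closure ?T" for u
      using boundary[OF that] by (auto simp: cos_minus)
  qed (use f in auto)
  moreover have "(\<lambda>u. if u \<in> ?S then ?f u else 0) = bump" by (auto simp: bump_eq)
  moreover have "(if x \<in> ?S then ?f' x else (\<lambda>d. 0)) = (\<lambda>d. bump' x * d)" by (auto simp: bump'_eq)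
  moreover have "?S \<union> ?T = UNIV" by auto
  ultimately show ?thesis unfolding has_field_derivative_def by simp
qed

lemma bump_add_bump_minus_1:
  assumes "0 \<le> \<theta>" "\<theta> < 1"
  shows "bump \<theta> + bump (\<theta> - 1) = 1"
proof (cases "\<theta> = 0")
  case False
  then have "bump \<theta> = cos (pi * \<theta> / 2) ^ 2" "bump (\<theta> - 1) = cos (pi * \<theta> / 2 - pi / 2) ^ 2"
    using assms by (simp_all add: bump_eq algebra_simps diff_divide_distrib)
  moreover have "cos (pi * \<theta> / 2 - pi / 2) = sin (pi * \<theta> / 2)" by (simp add: cos_diff)
  ultimately show ?thesis by simp
qed (simp add: bump_eq)

lemma bump_add_int:
  fixes \<theta> :: real and d :: int
  assumes "0 \<le> \<theta>" "\<theta> < 1"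
  shows "bump (\<theta> + d) = (if d = 0 then bump \<theta> else 0) + (if d = -1 then bump (\<theta> - 1) else 0)"
proof -
  have "d = 0 \<or> d = -1 \<or> 1 \<le> \<bar>\<theta> + d\<bar>" using assms by linarith
  then show ?thesis using bump_eq_0 by auto
qed

lemma int_eq_0_if_bounded:
  fixes c :: int and M \<rho> :: real
  assumes "M \<ge> 2" "-1 \<le> \<rho>" "\<rho> < 1" "-M/2 \<le> \<rho> + M * c" "\<rho> + M * c < M/2"
  shows "c = 0"
proof (rule ccontr)
  assume "c \<noteq> 0"
  then have "M \<le> M * c \<or> M * c \<le> - M"
    using assms(1) mult_left_mono[of 1 "of_int c" M] mult_left_mono[of "of_int c" "-1" M] by force
  then show False using assms by linarith
qed

lemma int_eq_iff_mod_eq_if_bounded: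
  fixes M j :: nat and m q e :: int and \<theta> :: real
  assumes M: "M \<ge> 2" and j: "j < M" and e: "-1 \<le> \<theta> + e" "\<theta> + e < 1"
    and bounds: "- real M / 2 \<le> \<theta> + of_int (m - int j - int M * q)"
      "\<theta> + of_int (m - int j - int M * q) < real M / 2"
  shows "m - int j - int M * q = e \<longleftrightarrow> int j = (m - e) mod int M"
proof
  assume "m - int j - int M * q = e"
  then have "m - e = int j + int M * q" by simp
  then show "int j = (m - e) mod int M" using j by simp
next
  assume "int j = (m - e) mod int M"
  define k where "k = (m - e) div int M - q"
  have eq: "m - int j - int M * q = e + int M * k"
    using \<open>int j = (m - e) mod int M\<close> unfolding k_def by (simp add: algebra_simps minus_mod_eq_mult_div)
  have "k = 0"
  proof (rule int_eq_0_if_bounded[of "real M" "\<theta> + e"])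
    show "- real M / 2 \<le> \<theta> + e + real M * k" "\<theta> + e + real M * k < real M / 2"
      using bounds unfolding eq by (simp_all add: add.assoc)
  qed (use M e in auto)
  then show "m - int j - int M * q = e" using eq by simp
qed

text \<open>Writing \<open>M * y = m + \<theta>\<close>, only two of the bumps are nonzero at \<open>y\<close>: \<open>bump \<theta>\<close> for
  \<open>j = m mod M\<close> and \<open>bump (\<theta> - 1)\<close> for \<open>j = (m + 1) mod M\<close>.\<close>

lemma bump_partition:
  fixes M :: nat
  assumes M: "M \<ge> 2"
  shows "(\<Sum>j<M. bump (real M * trep (y - real j / real M))) = 1"
proof -
  define m where "m = \<lfloor>real M * y\<rfloor>"
  define \<theta> where "\<theta> = real M * y - of_int m"
  have \<theta>: "0 \<le> \<theta>" "\<theta> < 1" unfolding \<theta>_def m_def by linarith+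
  define q where "q j = \<lfloor>y - real j / real M + 1/2\<rfloor>" for j :: nat
  define d where "d j = m - int j - int M * q j" for j :: nat
  have lift: "real M * trep (y - real j / real M) = \<theta> + of_int (d j)" for j
    unfolding trep_def q_def[symmetric] d_def \<theta>_def using M by (simp add: field_simps)
  have bounds: "- real M / 2 \<le> \<theta> + of_int (d j)" "\<theta> + of_int (d j) < real M / 2" for j
    using mult_left_mono[OF conjunct1[OF trep_bounds], of "real M" "y - real j / real M"]
      mult_strict_left_mono[OF conjunct2[OF trep_bounds], of "real M" "y - real j / real M"] M
    unfolding lift by auto
  have index: "d j = e \<longleftrightarrow> int j = (m - e) mod int M" if "j < M" "e \<in> {0, -1}" for j e
  proof -
    have "-1 \<le> \<theta> + e" "\<theta> + e < 1" using \<theta> that(2) by auto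
    from int_eq_iff_mod_eq_if_bounded[OF M that(1) this bounds[of j, unfolded d_def]]
    show ?thesis unfolding d_def .
  qed
  define j0 where "j0 = nat (m mod int M)"
  define j1 where "j1 = nat ((m + 1) mod int M)"
  have "j0 < M" "j1 < M" using M unfolding j0_def j1_def by (simp_all add: nat_less_iff)
  have j0: "d j = 0 \<longleftrightarrow> j = j0" if "j < M" for j
    using index[OF that, of 0] M unfolding j0_def by auto
  have j1: "d j = -1 \<longleftrightarrow> j = j1" if "j < M" for j
    using index[OF that, of "-1"] M unfolding j1_def by auto
  have "(\<Sum>j<M. bump (real M * trep (y - real j / real M))) =
      (\<Sum>j<M. (if j = j0 then bump \<theta> else 0) + (if j = j1 then bump (\<theta> - 1) else 0))"
    unfolding lift bump_add_int[OF \<theta>] using j0 j1 by (intro sum.cong) auto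
  also have "\<dots> = bump \<theta> + bump (\<theta> - 1)"
    using \<open>j0 < M\<close> \<open>j1 < M\<close> by (simp add: sum.distrib)
  also have "\<dots> = 1" by (rule bump_add_bump_minus_1[OF \<theta>])
  finally show ?thesis .
qed

lemma smooth_on_has_real_derivative:
  assumes "smooth_on S h" "r \<in> S"
  shows "(h has_real_derivative deriv h r) (at r)"
proof -
  have "((deriv ^^ 0) h) differentiable (at r)" using assms unfolding smooth_on_def by blast
  then have "h differentiable (at r)" by simp
  then show ?thesis by (rule DERIV_deriv_iff_real_differentiable[THEN iffD2])
qed

lemma smooth_on_isCont_deriv:
  assumes "smooth_on S h" "r \<in> S"
  shows "isCont (deriv h) r"
proof -
  have "((deriv ^^ 1) h) differentiable (at r)" using assms unfolding smooth_on_def by blast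
  then have "deriv h differentiable (at r)" by simp
  then show ?thesis by (rule differentiable_imp_continuous_within)
qed

lemma smooth_on_deriv_eq_0_at_zero:
  assumes "smooth_on S h" "open S" "r \<in> S" "\<forall>s\<in>S. 0 \<le> h s" "h r = 0"
  shows "deriv h r = 0"
proof -
  obtain d where "d > 0" and d: "\<forall>y. dist y r < d \<longrightarrow> y \<in> S"
    using assms(2,3) unfolding open_dist by blast
  show ?thesis
  proof (rule DERIV_local_min[OF smooth_on_has_real_derivative[OF assms(1,3)] \<open>d > 0\<close>], intro allI impI)
    fix y assume "\<bar>r - y\<bar> < d"
    then have "dist y r < d" by (metis dist_commute dist_real_def)
    then have "y \<in> S" using d by blast
    then show "h r \<le> h y" using assms(4,5) by simp
  qed
qed

lemma smooth_on_deriv_bounded: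
  assumes h: "smooth_on {0<..} h" "\<forall>r>0. 0 \<le> h r"
    and supp: "\<forall>r>0. r \<notin> {a<..<b} \<longrightarrow> h r = 0" and "0 < a"
  shows "\<exists>P\<ge>0. \<forall>r>0. \<bar>deriv h r\<bar> \<le> P"
proof -
  have "continuous_on {a..b} (deriv h)"
    using smooth_on_isCont_deriv[OF h(1)] \<open>0 < a\<close> by (intro continuous_at_imp_continuous_on) auto
  then have "bounded (deriv h ` {a..b})" by (intro compact_imp_bounded compact_continuous_image) auto
  then obtain P where P: "\<forall>y\<in>deriv h ` {a..b}. \<bar>y\<bar> \<le> P" unfolding bounded_iff by auto
  have "\<bar>deriv h r\<bar> \<le> max P 0" if "r > 0" for r
  proof (cases "r \<in> {a..b}")
    case True
    then have "\<bar>deriv h r\<bar> \<le> P" using P by blast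
    then show ?thesis by simp
  next
    case False
    then have "h r = 0" using supp that by auto
    then have "deriv h r = 0"
      using smooth_on_deriv_eq_0_at_zero[OF h(1) open_greaterThan] h(2) that by simp
    then show ?thesis by simp
  qed
  then show ?thesis by (intro exI[of _ "max P 0"]) auto
qed

lemma C1c_zero: "C1c (\<lambda>w. 0)"
proof -
  have "C1_on UNIV (\<lambda>w::real\<times>real. 0::real)"
    by (rule C1_onI[of UNIV _ "\<lambda>z. 0" "\<lambda>z. 0"]) (simp_all add: has_partials_const)
  then show ?thesis unfolding C1c_def periodic_x_def by simp
qed

lemma C1c_lincomb:
  assumes "C1c f" "C1c g"
  shows "C1c (\<lambda>w. a * f w + b * g w)"
proof -
  obtain K1 where K1: "\<forall>t x. \<bar>t\<bar> > K1 \<longrightarrow> f (t, x) = 0" using assms(1) unfolding C1c_def by blast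
  obtain K2 where K2: "\<forall>t x. \<bar>t\<bar> > K2 \<longrightarrow> g (t, x) = 0" using assms(2) unfolding C1c_def by blast
  have partials: "has_partials f (pdt f z) (pdx f z) z" "has_partials g (pdt g z) (pdx g z) z" for z
    using assms unfolding C1c_def C1_on_def by (blast intro: differentiable_imp_has_partials)+
  have "C1_on UNIV (\<lambda>w. a * f w + b * g w)"
  proof (rule C1_onI[of UNIV _ "\<lambda>z. a * pdt f z + b * pdt g z" "\<lambda>z. a * pdx f z + b * pdx g z"])
    show "has_partials (\<lambda>w. a * f w + b * g w) (a * pdt f z + b * pdt g z) (a * pdx f z + b * pdx g z) z"
      for z by (intro has_partials_add has_partials_cmult partials)
  next
    show "continuous_on UNIV (\<lambda>z. a * pdt f z + b * pdt g z)"
      using assms unfolding C1c_def C1_on_def by (auto intro!: continuous_intros)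
    show "continuous_on UNIV (\<lambda>z. a * pdx f z + b * pdx g z)"
      using assms unfolding C1c_def C1_on_def by (auto intro!: continuous_intros)
  qed
  moreover have "\<forall>t x. \<bar>t\<bar> > max K1 K2 \<longrightarrow> a * f (t, x) + b * g (t, x) = 0" using K1 K2 by auto
  moreover have "periodic_x (\<lambda>w. a * f w + b * g w)"
    using assms unfolding C1c_def periodic_x_def by simp
  ultimately show ?thesis unfolding C1c_def by blast
qed

lemma C1c_cmult: "C1c g \<Longrightarrow> C1c (\<lambda>w. a * g w)"
  using C1c_lincomb[of g g a 0] by simp

lemma C1c_sum: "finite S \<Longrightarrow> (\<And>j. j \<in> S \<Longrightarrow> C1c (P j)) \<Longrightarrow> C1c (\<lambda>w. \<Sum>j\<in>S. P j w)"
proof (induction S rule: finite_induct)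
  case (insert a S)
  then show ?case using C1c_lincomb[of "P a" "\<lambda>w. \<Sum>j\<in>S. P j w" 1 1] by simp
qed (simp add: C1c_zero)

lemma linear_C1c_zero:
  assumes "linear_C1c X"
  shows "X (\<lambda>w. 0) = 0"
proof -
  have "X (\<lambda>w. 0 * 0 + 0 * 0) = 0 * X (\<lambda>w. 0) + 0 * X (\<lambda>w. 0)"
    using assms C1c_zero unfolding linear_C1c_def by blast
  then show ?thesis by simp
qed

lemma linear_C1c_cmult:
  assumes "linear_C1c X" "C1c f"
  shows "X (\<lambda>w. c * f w) = c * X f"
proof -
  have "X (\<lambda>w. c * f w + 0 * f w) = c * X f + 0 * X f"
    using assms unfolding linear_C1c_def by blast
  then show ?thesis by simp
qed

lemma linear_C1c_sum:
  assumes X: "linear_C1c X"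
  shows "finite S \<Longrightarrow> (\<And>j. j \<in> S \<Longrightarrow> C1c (P j)) \<Longrightarrow> X (\<lambda>w. \<Sum>j\<in>S. P j w) = (\<Sum>j\<in>S. X (P j))"
proof (induction S rule: finite_induct)
  case (insert a S)
  then have "X (\<lambda>w. 1 * P a w + 1 * (\<Sum>j\<in>S. P j w)) = 1 * X (P a) + 1 * X (\<lambda>w. \<Sum>j\<in>S. P j w)"
    using X C1c_sum[of S P] unfolding linear_C1c_def by blast
  then show ?case using insert by simp
qed (simp add: linear_C1c_zero[OF X])

lemma abs_scaleS_le_holder_norm:
  assumes "X \<in> Calpha \<alpha>" "S < T" "0 < \<delta>" "\<delta> \<le> 1" "z \<in> {S..T} \<times> {-1/2..<1/2}" "g \<in> B1"
  shows "\<bar>X (scaleS \<delta> z g)\<bar> \<le> \<delta> powr \<alpha> * holder_norm \<alpha> X S T"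
proof -
  have "\<delta> powr (-\<alpha>) * \<bar>X (scaleS \<delta> z g)\<bar> \<in> holder_vals \<alpha> X S T"
    unfolding holder_vals_def mem_Collect_eq using assms(3-6)
    by (intro exI[of _ \<delta>] exI[of _ z] exI[of _ g]) auto
  moreover have "bdd_above (holder_vals \<alpha> X S T)" using assms(1,2) unfolding Calpha_def by auto
  ultimately have "\<delta> powr (-\<alpha>) * \<bar>X (scaleS \<delta> z g)\<bar> \<le> holder_norm \<alpha> X S T"
    unfolding holder_norm_def by (rule cSup_upper)
  then have "\<delta> powr \<alpha> * (\<delta> powr (-\<alpha>) * \<bar>X (scaleS \<delta> z g)\<bar>) \<le> \<delta> powr \<alpha> * holder_norm \<alpha> X S T"
    by (intro mult_left_mono) auto
  moreover have "\<delta> powr \<alpha> * \<delta> powr (-\<alpha>) = 1" using assms(3) by (simp add: powr_add[symmetric])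
  ultimately show ?thesis by (simp add: mult.assoc[symmetric])
qed

lemma one_div_powr_eq:
  fixes c \<alpha> :: real
  assumes c: "0 < c"
  shows "(1 / c) powr \<alpha> = c powr (- (1 + \<alpha>)) * c"
proof -
  have "c powr (- (1 + \<alpha>)) * c = c powr (- (1 + \<alpha>)) * c powr 1" using c by simp
  also have "\<dots> = c powr (- \<alpha>)" by (simp only: powr_add[symmetric]) simp
  also have "\<dots> = (1 / c) powr \<alpha>" using c by (simp add: powr_divide powr_minus inverse_eq_divide)
  finally show ?thesis ..
qed

lemma supnorm_le: "S \<noteq> {} \<Longrightarrow> (\<And>w. w \<in> S \<Longrightarrow> \<bar>h w\<bar> \<le> A) \<Longrightarrow> supnorm S h \<le> A"
  unfolding supnorm_def by (rule cSUP_least)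

lemma abs_le_supnorm:
  assumes "bounded (h ` S)" "w \<in> S"
  shows "\<bar>h w\<bar> \<le> supnorm S h"
proof -
  obtain B where "\<forall>y\<in>h ` S. norm y \<le> B" using assms unfolding bounded_iff by blast
  then have "bdd_above ((\<lambda>z. \<bar>h z\<bar>) ` S)" by (intro bdd_aboveI2[of _ _ B]) auto
  then show ?thesis unfolding supnorm_def using assms(2) by (rule cSUP_upper[rotated])
qed

definition window ::
    "(real \<Rightarrow> real) \<Rightarrow> (real \<times> real \<Rightarrow> real) \<Rightarrow> real \<Rightarrow> real \<Rightarrow> real \<Rightarrow> real \<Rightarrow> real \<Rightarrow> real \<times> real \<Rightarrow> real"
  where "window h G p q r s K w = G (p + q * fst w, r + s * snd w) * h (K * snd w)"

lemma has_partials_window: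
  assumes "\<And>w. has_partials G (G1 w) (G2 w) w"
  shows "has_partials (window bump G p q r s K) (q * window bump G1 p q r s K z)
    (s * window bump G2 p q r s K z + K * window bump' G p q r s K z) z"
proof -
  obtain a v where z: "z = (a, v)" by (cases z)
  have "has_partials (\<lambda>w. G (p + q * fst w, r + s * snd w))
      (q * G1 (p + q * a, r + s * v)) (s * G2 (p + q * a, r + s * v)) (a, v)"
    by (rule has_partials_affine) (rule assms)
  moreover have "((\<lambda>v. bump (K * v)) has_real_derivative bump' (K * v) * K) (at v)"
    by (rule DERIV_chain2[OF has_real_derivative_bump]) (auto intro!: derivative_eq_intros)
  then have "has_partials (\<lambda>w. bump (K * snd w)) 0 (bump' (K * v) * K) (a, v)"
    using has_partials_snd[of "\<lambda>v. bump (K * v)" "bump' (K * v) * K" "(a, v)"] by simp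
  ultimately show ?thesis
    using has_partials_mult unfolding window_def z by (fastforce simp: algebra_simps)
qed

lemma vanishes_on_band_window:
  assumes "\<And>u. 1 \<le> \<bar>u\<bar> \<Longrightarrow> h u = 0" "K \<ge> 4"
  shows "vanishes_on_band (window h G p q r s K)"
proof -
  have "h (K * v) = 0" if "1/4 \<le> \<bar>v\<bar>" for v
  proof (rule assms(1))
    have "4 * (1/4) \<le> K * \<bar>v\<bar>" using assms(2) that by (intro mult_mono) auto
    then show "1 \<le> \<bar>K * v\<bar>" using assms(2) by (simp add: abs_mult)
  qed
  then show ?thesis unfolding vanishes_on_band_def window_def by simp
qed

lemma vanishes_on_band_cmult: "vanishes_on_band B \<Longrightarrow> vanishes_on_band (\<lambda>w. a * B w)"
  unfolding vanishes_on_band_def by simp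

lemma vanishes_on_band_add:
  "vanishes_on_band A \<Longrightarrow> vanishes_on_band B \<Longrightarrow> vanishes_on_band (\<lambda>w. A w + B w)"
  unfolding vanishes_on_band_def by simp

lemma continuous_on_window:
  assumes "continuous_on UNIV G" "continuous_on UNIV h"
  shows "continuous_on UNIV (window h G p q r s K)"
  unfolding window_def
  by (intro continuous_intros continuous_on_compose2[OF assms(1)] continuous_on_compose2[OF assms(2)])
    auto

lemma vanishes_on_band_window_bump:
  assumes "K \<ge> 4"
  shows "vanishes_on_band (window bump G p q r s K)"
    "vanishes_on_band (\<lambda>w. q * window bump G1 p q r s K w)"
    "vanishes_on_band (\<lambda>w. s * window bump G2 p q r s K w + K * window bump' G p q r s K w)"
proof -
  have "vanishes_on_band (window h G' p q r s K)" if "h = bump \<or> h = bump'" for h G'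
    using vanishes_on_band_window[OF _ assms] bump_eq_0 that by blast
  then show "vanishes_on_band (window bump G p q r s K)"
    "vanishes_on_band (\<lambda>w. q * window bump G1 p q r s K w)"
    "vanishes_on_band (\<lambda>w. s * window bump G2 p q r s K w + K * window bump' G p q r s K w)"
    by (auto intro!: vanishes_on_band_add vanishes_on_band_cmult)
qed

lemma has_partials_periodize_window:
  assumes "\<And>w. has_partials G (G1 w) (G2 w) w" "K \<ge> 4"
  shows "has_partials (periodize (window bump G p q r s K) x0)
    (periodize (\<lambda>w. q * window bump G1 p q r s K w) x0 z)
    (periodize (\<lambda>w. s * window bump G2 p q r s K w + K * window bump' G p q r s K w) x0 z) z"
  by (rule has_partials_periodize[OF has_partials_window[OF assms(1)] vanishes_on_band_window_bump[OF assms(2)]])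

lemma C1_on_periodize_window:
  assumes "\<And>w. has_partials G (G1 w) (G2 w) w"
    and "continuous_on UNIV G" "continuous_on UNIV G1" "continuous_on UNIV G2" "K \<ge> 4"
  shows "C1_on UNIV (periodize (window bump G p q r s K) x0)"
  by (rule C1_on_periodize[OF has_partials_window[OF assms(1)] vanishes_on_band_window_bump[OF assms(5)]])
    (use assms(2-4) continuous_on_bump in \<open>auto intro!: continuous_intros continuous_on_window\<close>)

section \<open>The localized function \<open>f\<^sub>n\<close>\<close>

lemma eventually_nhds_fst_gt:
  fixes z :: "real \<times> real"
  assumes "a < fst z"
  shows "eventually (\<lambda>w. a < fst w) (nhds z)"
proof -
  have "open {w :: real \<times> real. a < fst w}" by (intro open_Collect_less continuous_intros)
  from eventually_nhds_in_open[OF this] show ?thesis using assms by simp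
qed

lemma eventually_nhds_fst_lt:
  fixes z :: "real \<times> real"
  assumes "fst z < b"
  shows "eventually (\<lambda>w. fst w < b) (nhds z)"
proof -
  have "open {w :: real \<times> real. fst w < b}" by (intro open_Collect_less continuous_intros)
  from eventually_nhds_in_open[OF this] show ?thesis using assms by simp
qed

lemma continuous_on_glue_at_0:
  fixes G H :: "real \<times> real \<Rightarrow> real"
  assumes "\<And>w. fst w > 0 \<Longrightarrow> G w = H w" "e > 0" "\<And>w. fst w < e \<Longrightarrow> G w = 0"
    and "\<And>z. fst z > 0 \<Longrightarrow> isCont H z"
  shows "continuous_on UNIV G"
proof (rule continuous_at_imp_continuous_on, intro ballI)
  fix z :: "real \<times> real"
  show "isCont G z"
  proof (cases "fst z > 0")
    case True
    have "eventually (\<lambda>w. H w = G w) (nhds z)"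
      using eventually_nhds_fst_gt[OF True] by (rule eventually_mono) (use assms(1) in auto)
    then show ?thesis using assms(4)[OF True] isCont_cong by blast
  next
    case False
    have "eventually (\<lambda>w. 0 = G w) (nhds z)"
      using eventually_nhds_fst_lt[of z e] False assms(2) by (auto elim: eventually_mono simp: assms(3))
    then show ?thesis using isCont_cong[of "\<lambda>w. 0" G z] by simp
  qed
qed

locale dyadic_cutoff =
  fixes \<phi> :: "real \<Rightarrow> real" and f :: "real \<times> real \<Rightarrow> real" and c :: real
  assumes phi_smooth: "smooth_on {0<..} \<phi>"
    and phi_range: "\<forall>r>0. 0 \<le> \<phi> r \<and> \<phi> r \<le> 1"
    and phi_supp: "\<forall>r>0. r \<notin> {1/16<..<1/4} \<longrightarrow> \<phi> r = 0"
    and f_periodic: "\<forall>t>0. \<forall>x. f (t, x + 1) = f (t, x)"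
    and f_C1: "C1_on ({0<..} \<times> UNIV) f"
    and c_ge_1: "1 \<le> c"
begin

text \<open>For \<open>c = 2\<^sup>n\<close>, \<open>F\<close> is the function \<open>f\<^sub>n\<close>; \<open>Ft\<close> and \<open>Fx\<close> are its partial derivatives.\<close>

definition F :: "real \<times> real \<Rightarrow> real" where
  "F w = (if fst w > 0 then f w * \<phi> (c * fst w) else 0)"

definition Ft :: "real \<times> real \<Rightarrow> real" where
  "Ft w = (if fst w > 0 then pdt f w * \<phi> (c * fst w) + f w * (c * deriv \<phi> (c * fst w)) else 0)"

definition Fx :: "real \<times> real \<Rightarrow> real" where
  "Fx w = (if fst w > 0 then pdx f w * \<phi> (c * fst w) else 0)"

lemma phi_eq_0_outside:
  assumes "r > 0" "r \<notin> {1/16<..<1/4}"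
  shows "\<phi> r = 0" "deriv \<phi> r = 0"
proof -
  show "\<phi> r = 0" using phi_supp assms by blast
  then show "deriv \<phi> r = 0"
    using smooth_on_deriv_eq_0_at_zero[OF phi_smooth open_greaterThan] phi_range assms(1) by simp
qed

lemma F_support:
  assumes "F w \<noteq> 0 \<or> Ft w \<noteq> 0 \<or> Fx w \<noteq> 0"
  shows "0 < fst w" "1/16 < c * fst w" "c * fst w < 1/4"
proof -
  show t: "0 < fst w" using assms unfolding F_def Ft_def Fx_def by (auto split: if_splits)
  have "c * fst w \<in> {1/16<..<1/4}"
  proof (rule ccontr)
    assume "c * fst w \<notin> {1/16<..<1/4}"
    then have "\<phi> (c * fst w) = 0" "deriv \<phi> (c * fst w) = 0"
      using phi_eq_0_outside t c_ge_1 by simp_all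
    then show False using assms t unfolding F_def Ft_def Fx_def by simp
  qed
  then show "1/16 < c * fst w" "c * fst w < 1/4" by simp_all
qed

lemma F_eq_0_near_0:
  assumes "fst w < 1 / (16 * c)"
  shows "F w = 0 \<and> Ft w = 0 \<and> Fx w = 0"
proof (rule ccontr)
  assume "\<not> ?thesis"
  then have "1/16 < c * fst w" using F_support by blast
  moreover have "c * fst w < 1/16" using assms c_ge_1 by (simp add: field_simps)
  ultimately show False by simp
qed

lemma f_periodic_int: "t > 0 \<Longrightarrow> f (t, x + of_int k) = f (t, x)"
proof (induction k rule: int_induct[where k = 0])
  case (step1 i)
  then show ?case using f_periodic[rule_format, of t "x + of_int i"] by (simp add: add.assoc)
next
  case (step2 i)
  then show ?case using f_periodic[rule_format, of t "x + of_int (i - 1)"] by (simp add: algebra_simps)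
qed simp

lemma F_periodic_int: "F (t, x + of_int k) = F (t, x)"
  unfolding F_def using f_periodic_int by simp

lemma has_partials_f: "0 < fst z \<Longrightarrow> has_partials f (pdt f z) (pdx f z) z"
  using f_C1 unfolding C1_on_def by (cases z) (auto intro: differentiable_imp_has_partials)

lemma pd_f_periodic_int:
  assumes "t > 0"
  shows "pdt f (t, x + of_int k) = pdt f (t, x)" "pdx f (t, x + of_int k) = pdx f (t, x)"
proof -
  have "has_partials (\<lambda>w. f (0 + 1 * fst w, of_int k + 1 * snd w))
      (1 * pdt f (t, x + of_int k)) (1 * pdx f (t, x + of_int k)) (t, x)"
    by (rule has_partials_affine) (use has_partials_f[of "(t, x + of_int k)"] assms in \<open>simp add: add.commute\<close>)
  moreover have "eventually (\<lambda>w. f (0 + 1 * fst w, of_int k + 1 * snd w) = f w) (nhds (t, x))"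
    using eventually_nhds_fst_gt[of 0 "(t, x)"] assms
    by (auto elim!: eventually_mono simp: f_periodic_int add.commute)
  ultimately have "has_partials f (pdt f (t, x + of_int k)) (pdx f (t, x + of_int k)) (t, x)"
    by (auto intro: has_partials_transform)
  from has_partials_imp_pd[OF this] has_partials_imp_pd[OF has_partials_f[of "(t, x)"]] assms
  show "pdt f (t, x + of_int k) = pdt f (t, x)" "pdx f (t, x + of_int k) = pdx f (t, x)" by simp_all
qed

lemma has_partials_F: "has_partials F (Ft z) (Fx z) z"
proof (cases "fst z > 0")
  case True
  obtain t x where z: "z = (t, x)" by (cases z)
  have "((\<lambda>s. \<phi> (c * s)) has_real_derivative deriv \<phi> (c * t) * c) (at t)"
    by (rule DERIV_chain2[OF smooth_on_has_real_derivative[OF phi_smooth]])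
      (use True z c_ge_1 in \<open>auto intro!: derivative_eq_intros\<close>)
  then have "has_partials (\<lambda>w. \<phi> (c * fst w)) (deriv \<phi> (c * t) * c) 0 z"
    using has_partials_fst[of "\<lambda>s. \<phi> (c * s)" _ z] z by simp
  from has_partials_mult[OF has_partials_f[OF True] this]
  have "has_partials (\<lambda>w. f w * \<phi> (c * fst w)) (Ft z) (Fx z) z"
    using True unfolding Ft_def Fx_def z by (simp add: algebra_simps)
  then show ?thesis
    by (rule has_partials_transform)
      (use eventually_nhds_fst_gt[OF True] in \<open>auto elim!: eventually_mono simp: F_def\<close>)
next
  case False
  have "has_partials (\<lambda>w. 0) 0 0 z" by (rule has_partials_const)
  moreover have "0 < 1 / (16 * c)" using c_ge_1 by simp
  then have "fst z < 1 / (16 * c)" using False by linarith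
  then have "eventually (\<lambda>w. 0 = F w) (nhds z)"
    by (rule eventually_mono[OF eventually_nhds_fst_lt]) (use F_eq_0_near_0 in auto)
  ultimately have "has_partials F 0 0 z" by (rule has_partials_transform)
  then show ?thesis using False unfolding Ft_def Fx_def by simp
qed

lemma isCont_f_pd:
  assumes "0 < fst z"
  shows "isCont f z" "isCont (pdt f) z" "isCont (pdx f) z"
proof -
  have "open ({0<..} \<times> UNIV :: (real \<times> real) set)" by (intro open_Times open_greaterThan open_UNIV)
  moreover have "z \<in> {0<..} \<times> UNIV" using assms by (cases z) auto
  ultimately show "isCont (pdt f) z" "isCont (pdx f) z"
    using f_C1 continuous_on_eq_continuous_at unfolding C1_on_def by blast+
  show "isCont f z"
    using has_partials_imp_differentiable[OF has_partials_f[OF assms]]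
    by (rule differentiable_imp_continuous_within)
qed

lemma isCont_phi_scaled:
  fixes z :: "real \<times> real"
  assumes "0 < fst z"
  shows "isCont (\<lambda>w. \<phi> (c * fst w)) z" "isCont (\<lambda>w. deriv \<phi> (c * fst w)) z"
proof -
  have pos: "c * fst z \<in> {0<..}" using assms c_ge_1 by simp
  have "isCont (\<lambda>w::real \<times> real. c * fst w) z" by (intro continuous_intros)
  then show "isCont (\<lambda>w. \<phi> (c * fst w)) z" "isCont (\<lambda>w. deriv \<phi> (c * fst w)) z"
    using DERIV_isCont[OF smooth_on_has_real_derivative[OF phi_smooth pos]]
      smooth_on_isCont_deriv[OF phi_smooth pos] isCont_o2 by blast+
qed

lemma continuous_on_F: "continuous_on UNIV F" "continuous_on UNIV Ft" "continuous_on UNIV Fx"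
proof -
  have e: "0 < 1 / (16 * c)" using c_ge_1 by simp
  show "continuous_on UNIV F"
    by (rule continuous_on_glue_at_0[OF _ e, of _ "\<lambda>w. f w * \<phi> (c * fst w)"])
      (auto simp: F_def dest: F_eq_0_near_0 intro!: continuous_intros isCont_f_pd isCont_phi_scaled)
  show "continuous_on UNIV Ft"
    by (rule continuous_on_glue_at_0[OF _ e,
          of _ "\<lambda>w. pdt f w * \<phi> (c * fst w) + f w * (c * deriv \<phi> (c * fst w))"])
      (auto simp: Ft_def dest: F_eq_0_near_0 intro!: continuous_intros isCont_f_pd isCont_phi_scaled)
  show "continuous_on UNIV Fx"
    by (rule continuous_on_glue_at_0[OF _ e, of _ "\<lambda>w. pdx f w * \<phi> (c * fst w)"])
      (auto simp: Fx_def dest: F_eq_0_near_0 intro!: continuous_intros isCont_f_pd isCont_phi_scaled)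
qed

lemma abs_F_le:
  assumes f: "\<forall>t>0. \<forall>x. \<bar>f (t, x)\<bar> \<le> S0 \<and> \<bar>pdt f (t, x)\<bar> \<le> S1 \<and> \<bar>pdx f (t, x)\<bar> \<le> S2"
    and phi': "\<forall>r>0. \<bar>deriv \<phi> r\<bar> \<le> P"
  shows "\<bar>F w\<bar> \<le> S0" "\<bar>Ft w\<bar> \<le> S1 + c * P * S0" "\<bar>Fx w\<bar> \<le> S2"
proof -
  have S: "0 \<le> S0" "0 \<le> S1" "0 \<le> S2" "0 \<le> P" using f[rule_format, of 1 0] phi'[rule_format, of 1] by auto
  show "\<bar>F w\<bar> \<le> S0" "\<bar>Ft w\<bar> \<le> S1 + c * P * S0" "\<bar>Fx w\<bar> \<le> S2"
  proof (atomize (full), cases "fst w > 0")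
    case True
    obtain t x where w: "w = (t, x)" by (cases w)
    have phi: "0 \<le> \<phi> (c * t)" "\<phi> (c * t) \<le> 1" "\<bar>deriv \<phi> (c * t)\<bar> \<le> P"
      using phi_range phi' True c_ge_1 w by auto
    have f': "\<bar>f w\<bar> \<le> S0" "\<bar>pdt f w\<bar> \<le> S1" "\<bar>pdx f w\<bar> \<le> S2" using f True w by auto
    have "\<bar>f w * \<phi> (c * t)\<bar> \<le> S0 * 1" "\<bar>pdt f w * \<phi> (c * t)\<bar> \<le> S1 * 1"
      "\<bar>pdx f w * \<phi> (c * t)\<bar> \<le> S2 * 1" "\<bar>f w * (c * deriv \<phi> (c * t))\<bar> \<le> S0 * (c * P)"
      unfolding abs_mult using phi f' S c_ge_1 by (intro mult_mono; simp)+
    then show "\<bar>F w\<bar> \<le> S0 \<and> \<bar>Ft w\<bar> \<le> S1 + c * P * S0 \<and> \<bar>Fx w\<bar> \<le> S2"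
      using True w unfolding F_def Ft_def Fx_def by (auto simp: algebra_simps intro: abs_triangle_ineq[THEN order_trans])
  qed (use S c_ge_1 in \<open>simp add: F_def Ft_def Fx_def\<close>)
qed

lemma abs_f_le_supnorm:
  assumes "bounded (f ` Omega0)" "bounded (pdt f ` Omega0)" "bounded (pdx f ` Omega0)" "t > 0"
  shows "\<bar>f (t, x)\<bar> \<le> supnorm Omega0 f" "\<bar>pdt f (t, x)\<bar> \<le> supnorm Omega0 (pdt f)"
    "\<bar>pdx f (t, x)\<bar> \<le> supnorm Omega0 (pdx f)"
proof -
  have x: "x = trep x + of_int \<lfloor>x + 1/2\<rfloor>" unfolding trep_def by simp
  have "(t, trep x) \<in> Omega0" unfolding Omega0_def using assms(4) trep_bounds[of x] by auto
  then show "\<bar>f (t, x)\<bar> \<le> supnorm Omega0 f" "\<bar>pdt f (t, x)\<bar> \<le> supnorm Omega0 (pdt f)"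
    "\<bar>pdx f (t, x)\<bar> \<le> supnorm Omega0 (pdx f)"
    using abs_le_supnorm[OF assms(1)] abs_le_supnorm[OF assms(2)] abs_le_supnorm[OF assms(3)]
      f_periodic_int[OF assms(4), of "trep x"] pd_f_periodic_int[OF assms(4), of "trep x"]
    by (metis x)+
qed

section \<open>Decomposition into rescaled test functions\<close>

lemma F_add_trep: "F (t, r + trep (x - r)) = F (t, x)"
proof -
  let ?k = "\<lfloor>x - r + 1/2\<rfloor>"
  have "F (t, x - of_int ?k) = F (t, x)" using F_periodic_int[of t "x - of_int ?k" ?k] by simp
  then show ?thesis unfolding trep_def by simp
qed

lemma periodize_window_F:
  "periodize (window bump F 0 1 r 1 K) r (t, x) = F (t, x) * bump (K * trep (x - r))"
  unfolding periodize_def window_def using F_add_trep by simp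

lemma C1c_periodize_window_F:
  assumes "K \<ge> 4"
  shows "C1c (periodize (window bump F 0 1 r 1 K) r)"
proof -
  have "periodize (window bump F 0 1 r 1 K) r (t, x) = 0" if "\<bar>t\<bar> > 1" for t x
  proof -
    have "F (t, x) = 0"
    proof (rule ccontr)
      assume "F (t, x) \<noteq> 0"
      then have "0 < t" "c * t < 1/4" using F_support[of "(t, x)"] by auto
      moreover have "t \<le> c * t" using c_ge_1 \<open>0 < t\<close> by simp
      ultimately show False using that by linarith
    qed
    then show ?thesis unfolding periodize_window_F by simp
  qed
  then show ?thesis
    using C1_on_periodize_window[OF has_partials_F continuous_on_F assms] periodic_x_periodize
    unfolding C1c_def by blast
qed

lemma F_eq_sum_periodize_window:
  fixes M :: nat
  assumes "M \<ge> 2"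
  shows "F w = (\<Sum>j<M. periodize (window bump F 0 1 (j / M - 1/2) 1 M) (j / M - 1/2) w)"
proof -
  obtain t x where w: "w = (t, x)" by (cases w)
  have "trep (x - (j / M - 1/2)) = trep ((x + 1/2) - j / M)" for j :: nat
    by (simp add: algebra_simps)
  then show ?thesis
    using bump_partition[OF assms, of "x + 1/2"]
    unfolding w periodize_window_F by (simp flip: sum_distrib_left)
qed

text \<open>\<open>5/(32 c)\<close> is the midpoint of the support \<open>(2/(32 c), 8/(32 c))\<close> of \<open>F\<close> in time.\<close>

definition test_fn :: "real \<Rightarrow> real \<Rightarrow> real \<times> real \<Rightarrow> real" where
  "test_fn \<kappa> r w = \<kappa> * periodize (window bump F (5 / (32 * c)) (1 / c) r (1 / c) 8) 0 w"

lemma test_fn_eq: "test_fn \<kappa> r (a, u) = \<kappa> * (F (5 / (32 * c) + a / c, r + trep u / c) * bump (8 * trep u))"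
  unfolding test_fn_def periodize_def window_def by simp

lemma F_test_fn_support:
  assumes "F (5 / (32 * c) + a / c, y) \<noteq> 0"
  shows "\<bar>a\<bar> < 3/32"
proof -
  have "c * (5 / (32 * c) + a / c) = 5/32 + a" using c_ge_1 by (simp add: field_simps)
  then show ?thesis using F_support[OF disjI1[OF assms]] by auto
qed

lemma C1c_test_fn: "C1c (test_fn \<kappa> r)"
proof -
  let ?g = "periodize (window bump F (5 / (32 * c)) (1 / c) r (1 / c) 8) 0"
  have "?g (a, u) = 0" if "\<bar>a\<bar> > 1" for a u
    using F_test_fn_support[of a] that unfolding periodize_def window_def by fastforce
  then have "C1c ?g"
    using C1_on_periodize_window[OF has_partials_F continuous_on_F, of 8] periodic_x_periodize
    unfolding C1c_def by auto
  then show ?thesis unfolding test_fn_def[abs_def] by (rule C1c_cmult)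
qed

lemma test_fn_support: "test_fn \<kappa> r w \<noteq> 0 \<Longrightarrow> w \<in> ballRT (0, 0) (1/4)"
proof -
  obtain a u where w: "w = (a, u)" by (cases w)
  assume "test_fn \<kappa> r w \<noteq> 0"
  then have "F (5 / (32 * c) + a / c, r + trep u / c) \<noteq> 0" "bump (8 * trep u) \<noteq> 0"
    unfolding w test_fn_eq by auto
  then have "\<bar>a\<bar> < 3/32" "\<bar>8 * trep u\<bar> < 1"
    using F_test_fn_support bump_eq_0 by (blast, force)
  then show "w \<in> ballRT (0, 0) (1/4)" unfolding ballRT_def dRT_eq w by (simp add: abs_mult)
qed

lemma pd_test_fn:
  fixes a u r :: real
  defines "p \<equiv> (5 / (32 * c) + a / c, r + trep u / c)"
  shows "pdt (test_fn \<kappa> r) (a, u) = \<kappa> * (Ft p / c * bump (8 * trep u))"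
    "pdx (test_fn \<kappa> r) (a, u) = \<kappa> * (Fx p / c * bump (8 * trep u) + 8 * (F p * bump' (8 * trep u)))"
proof -
  let ?W = "\<lambda>h G. window h G (5 / (32 * c)) (1 / c) r (1 / c) 8"
  have "has_partials (test_fn \<kappa> r)
      (\<kappa> * periodize (\<lambda>w. 1 / c * ?W bump Ft w) 0 (a, u))
      (\<kappa> * periodize (\<lambda>w. 1 / c * ?W bump Fx w + 8 * ?W bump' F w) 0 (a, u)) (a, u)"
    unfolding test_fn_def[abs_def]
    by (intro has_partials_cmult has_partials_periodize_window[OF has_partials_F]) simp
  from has_partials_imp_pd[OF this]
  show "pdt (test_fn \<kappa> r) (a, u) = \<kappa> * (Ft p / c * bump (8 * trep u))"
    "pdx (test_fn \<kappa> r) (a, u) = \<kappa> * (Fx p / c * bump (8 * trep u) + 8 * (F p * bump' (8 * trep u)))"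
    unfolding periodize_def window_def p_def by simp_all
qed

lemma abs_test_fn_le:
  assumes f: "\<forall>t>0. \<forall>x. \<bar>f (t, x)\<bar> \<le> S0 \<and> \<bar>pdt f (t, x)\<bar> \<le> S1 \<and> \<bar>pdx f (t, x)\<bar> \<le> S2"
    and phi': "\<forall>r>0. \<bar>deriv \<phi> r\<bar> \<le> P" and "0 \<le> \<kappa>"
  shows "\<bar>test_fn \<kappa> r w\<bar> \<le> \<kappa> * S0" "\<bar>pdt (test_fn \<kappa> r) w\<bar> \<le> \<kappa> * (S1 + P * S0)"
    "\<bar>pdx (test_fn \<kappa> r) w\<bar> \<le> \<kappa> * (S2 + 16 * S0)"
proof -
  have S: "0 \<le> S0" "0 \<le> S1" "0 \<le> S2" "0 \<le> P" using f[rule_format, of 1 0] phi'[rule_format, of 1] by auto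
  have c: "1 / c \<le> 1" "0 < 1 / c" using c_ge_1 by simp_all
  note F = abs_F_le[OF f phi']
  obtain a u where w: "w = (a, u)" by (cases w)
  define p where "p = (5 / (32 * c) + a / c, r + trep u / c)"
  define b where "b = bump (8 * trep u)"
  have b: "0 \<le> b" "b \<le> 1" "\<bar>bump' (8 * trep u)\<bar> \<le> 2" unfolding b_def using bump_bounds by auto
  have "\<bar>F p * b\<bar> = \<bar>F p\<bar> * b" using b by (simp add: abs_mult)
  also have "\<dots> \<le> S0 * 1" using F b S by (intro mult_mono) auto
  finally have F0: "\<bar>F p * b\<bar> \<le> S0" by simp
  have "\<bar>Ft p / c * b\<bar> = \<bar>Ft p\<bar> / c * b" using b c by (simp add: abs_mult)
  also have "\<dots> \<le> (S1 + c * P * S0) / c * 1"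
    using F b S c by (intro mult_mono divide_right_mono) auto
  also have "\<dots> \<le> S1 + P * S0"
    using S c_ge_1 mult_left_mono[of 1 c S1] by (simp add: field_simps)
  finally have F1: "\<bar>Ft p / c * b\<bar> \<le> S1 + P * S0" .
  have "\<bar>Fx p / c * b\<bar> = \<bar>Fx p\<bar> * ((1 / c) * b)" using b c by (simp add: abs_mult)
  also have "\<dots> \<le> S2 * (1 * 1)" using F b S c by (intro mult_mono) auto
  finally have F2: "\<bar>Fx p / c * b\<bar> \<le> S2" by simp
  have "\<bar>8 * (F p * bump' (8 * trep u))\<bar> = 8 * (\<bar>F p\<bar> * \<bar>bump' (8 * trep u)\<bar>)" by (simp add: abs_mult)
  also have "\<dots> \<le> 8 * (S0 * 2)" using F b S by (intro mult_left_mono mult_mono) auto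
  finally have F3: "\<bar>8 * (F p * bump' (8 * trep u))\<bar> \<le> 16 * S0" by simp
  have F4: "\<bar>Fx p / c * b + 8 * (F p * bump' (8 * trep u))\<bar> \<le> S2 + 16 * S0"
    by (rule order_trans[OF abs_triangle_ineq add_mono[OF F2 F3]])
  have scale: "\<bar>\<kappa> * X\<bar> \<le> \<kappa> * Y" if "\<bar>X\<bar> \<le> Y" for X Y
    using \<open>0 \<le> \<kappa>\<close> that by (simp add: abs_mult mult_left_mono)
  have "test_fn \<kappa> r w = \<kappa> * (F p * b)" "pdt (test_fn \<kappa> r) w = \<kappa> * (Ft p / c * b)"
    "pdx (test_fn \<kappa> r) w = \<kappa> * (Fx p / c * b + 8 * (F p * bump' (8 * trep u)))"
    unfolding w test_fn_eq pd_test_fn p_def b_def by simp_all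
  then show "\<bar>test_fn \<kappa> r w\<bar> \<le> \<kappa> * S0" "\<bar>pdt (test_fn \<kappa> r) w\<bar> \<le> \<kappa> * (S1 + P * S0)"
    "\<bar>pdx (test_fn \<kappa> r) w\<bar> \<le> \<kappa> * (S2 + 16 * S0)"
    using scale[OF F0] scale[OF F1] scale[OF F4] by simp_all
qed

lemma test_fn_in_B1:
  assumes "\<forall>t>0. \<forall>x. \<bar>f (t, x)\<bar> \<le> S0 \<and> \<bar>pdt f (t, x)\<bar> \<le> S1 \<and> \<bar>pdx f (t, x)\<bar> \<le> S2"
    and "\<forall>r>0. \<bar>deriv \<phi> r\<bar> \<le> P" "0 \<le> \<kappa>" "\<kappa> * ((17 + P) * S0 + S1 + S2) \<le> 1"
  shows "test_fn \<kappa> r \<in> B1"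
  unfolding B1_def mem_Collect_eq
proof (intro conjI allI impI)
  show "w \<in> ballRT (0, 0) (1/4)" if "test_fn \<kappa> r w \<noteq> 0" for w
    using test_fn_support[OF that] .
  have "supnorm UNIV (test_fn \<kappa> r) + supnorm UNIV (pdt (test_fn \<kappa> r)) + supnorm UNIV (pdx (test_fn \<kappa> r))
      \<le> \<kappa> * S0 + \<kappa> * (S1 + P * S0) + \<kappa> * (S2 + 16 * S0)"
    using abs_test_fn_le[OF assms(1-3)] by (intro add_mono supnorm_le) auto
  also have "\<dots> = \<kappa> * ((17 + P) * S0 + S1 + S2)" by (simp add: algebra_simps)
  finally show "supnorm UNIV (test_fn \<kappa> r) + supnorm UNIV (pdt (test_fn \<kappa> r)) + supnorm UNIV (pdx (test_fn \<kappa> r)) \<le> 1"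
    using assms(4) by linarith
qed (rule C1c_test_fn)

lemma periodize_window_F_eq_0_off_ball:
  assumes "w \<notin> ballRT (5 / (32 * c), r) (1 / c)"
  shows "periodize (window bump F 0 1 r 1 (8 * c)) r w = 0"
proof (rule ccontr)
  obtain t x where w: "w = (t, x)" by (cases w)
  define y where "y = trep (x - r)"
  have c: "0 < c" using c_ge_1 by simp
  assume "periodize (window bump F 0 1 r 1 (8 * c)) r w \<noteq> 0"
  then have nz: "F (t, x) \<noteq> 0" "bump (8 * c * y) \<noteq> 0" unfolding w periodize_window_F y_def by auto
  from nz(1) have "1/16 < c * t" "c * t < 1/4" using F_support[of "(t, x)"] by auto
  then have "c * \<bar>5 / (32 * c) - t\<bar> < 3/32" using c by (simp add: abs_less_iff field_simps)
  moreover have "\<bar>8 * c * y\<bar> < 1" using nz(2) bump_eq_0 by force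
  ultimately have "c * (\<bar>5 / (32 * c) - t\<bar> + \<bar>y\<bar>) < 1" using c by (simp add: abs_mult algebra_simps)
  then show False
    using assms c unfolding ballRT_def mem_Collect_eq dRT_eq w y_def by (simp add: field_simps)
qed

lemma scaleS_test_fn:
  "scaleS (1 / c) (5 / (32 * c), r) (test_fn \<kappa> r) w
    = c\<^sup>2 * \<kappa> * periodize (window bump F 0 1 r 1 (8 * c)) r w"
proof -
  obtain t x where w: "w = (t, x)" by (cases w)
  define y where "y = trep (x - r)"
  have c: "0 < c" using c_ge_1 by simp
  have scale: "(1 / c) powr (-2) = c\<^sup>2" using c by (simp add: powr_minus powr_divide)
  have rhs: "periodize (window bump F 0 1 r 1 (8 * c)) r w = F (t, x) * bump (8 * c * y)"
    unfolding w periodize_window_F y_def by simp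
  show ?thesis
  proof (cases "w \<in> ballRT (5 / (32 * c), r) (1 / c)")
    case False
    then show ?thesis using periodize_window_F_eq_0_off_ball[OF False] unfolding scaleS_def by simp
  next
    case inball: True
    have arg: "(t - 5 / (32 * c)) / (1 / c) = c * t - 5/32" "y / (1 / c) = c * y"
      using c by (simp_all add: field_simps)
    have chart: "scaleS (1 / c) (5 / (32 * c), r) (test_fn \<kappa> r) w
        = c\<^sup>2 * chart (test_fn \<kappa> r) (c * t - 5/32, c * y)"
      unfolding scaleS_def if_P[OF inball] unfolding w fst_conv snd_conv y_def[symmetric] arg scale ..
    show ?thesis
    proof (cases "-1/2 \<le> c * y \<and> c * y < 1/2")
      case True
      then have "trep (c * y) = c * y" by (simp add: trep_id)
      then have "test_fn \<kappa> r (c * t - 5/32, c * y) = \<kappa> * (F (t, r + y) * bump (8 * c * y))"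
        unfolding test_fn_eq using c by (simp add: field_simps)
      also have "F (t, r + y) = F (t, x)" unfolding y_def by (rule F_add_trep)
      finally show ?thesis using True unfolding chart rhs chart_def by simp
    next
      case False
      then have "1/2 \<le> \<bar>c * y\<bar>" by auto
      then have "1 \<le> \<bar>8 * c * y\<bar>" by (simp add: abs_mult)
      then have "bump (8 * c * y) = 0" using bump_eq_0 by blast
      moreover have "chart (test_fn \<kappa> r) (c * t - 5/32, c * y) = 0"
        unfolding chart_def snd_conv if_not_P[OF False] ..
      ultimately show ?thesis unfolding chart rhs by simp
    qed
  qed
qed

lemma abs_X_periodize_window_F_le:
  assumes X: "X \<in> Calpha \<alpha>"
    and f: "\<forall>t>0. \<forall>x. \<bar>f (t, x)\<bar> \<le> S0 \<and> \<bar>pdt f (t, x)\<bar> \<le> S1 \<and> \<bar>pdx f (t, x)\<bar> \<le> S2"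
    and phi': "\<forall>r>0. \<bar>deriv \<phi> r\<bar> \<le> P"
    and \<kappa>: "0 < \<kappa>" "\<kappa> * ((17 + P) * S0 + S1 + S2) \<le> 1" and r: "-1/2 \<le> r" "r < 1/2"
  shows "c\<^sup>2 * \<kappa> * \<bar>X (periodize (window bump F 0 1 r 1 (8 * c)) r)\<bar> \<le> (1 / c) powr \<alpha> * holder_norm \<alpha> X (-1) 2"
proof -
  have lin: "linear_C1c X" using X unfolding Calpha_def by simp
  have z: "(5 / (32 * c), r) \<in> {-1..2} \<times> {-1/2..<1/2}" using c_ge_1 r by (auto simp: field_simps)
  have "c\<^sup>2 * \<kappa> * X (periodize (window bump F 0 1 r 1 (8 * c)) r) = X (scaleS (1 / c) (5 / (32 * c), r) (test_fn \<kappa> r))"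
    unfolding scaleS_test_fn
    by (rule linear_C1c_cmult[OF lin C1c_periodize_window_F, symmetric]) (use c_ge_1 in simp)
  also have "\<bar>\<dots>\<bar> \<le> (1 / c) powr \<alpha> * holder_norm \<alpha> X (-1) 2"
    using c_ge_1 by (intro abs_scaleS_le_holder_norm[OF X _ _ _ z test_fn_in_B1[OF f phi']]
        \<kappa>(2) less_imp_le[OF \<kappa>(1)]) auto
  finally show ?thesis using \<kappa>(1) c_ge_1 by (simp add: abs_mult)
qed

lemma abs_X_F_le_bounds:
  assumes "c \<in> \<nat>" and X: "X \<in> Calpha \<alpha>"
    and f: "\<forall>t>0. \<forall>x. \<bar>f (t, x)\<bar> \<le> S0 \<and> \<bar>pdt f (t, x)\<bar> \<le> S1 \<and> \<bar>pdx f (t, x)\<bar> \<le> S2"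
    and phi': "\<forall>r>0. \<bar>deriv \<phi> r\<bar> \<le> P" and pos: "0 < S0 + S1 + S2"
  shows "\<bar>X F\<bar> \<le> 8 * (17 + P) * c powr (- (1 + \<alpha>)) * (S0 + S1 + S2) * holder_norm \<alpha> X (-1) 2"
proof -
  define H where "H = holder_norm \<alpha> X (-1) 2"
  have S: "0 \<le> S0" "0 \<le> S1" "0 \<le> S2" "0 \<le> P" using f[rule_format, of 1 0] phi'[rule_format, of 1] by auto
  have c: "0 < c" using c_ge_1 by simp
  obtain m where "c = of_nat m" using \<open>c \<in> \<nat>\<close> by (rule Nats_cases)
  define M where "M = 8 * m"
  have M: "real M = 8 * c" "M \<ge> 2" using \<open>c = of_nat m\<close> c_ge_1 unfolding M_def by simp_all
  define \<kappa> where "\<kappa> = 1 / ((17 + P) * (S0 + S1 + S2))"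
  have N: "0 < (17 + P) * (S0 + S1 + S2)" using pos S by simp
  have \<kappa>: "0 < \<kappa>" "\<kappa> * ((17 + P) * S0 + S1 + S2) \<le> 1"
    using N S unfolding \<kappa>_def by (simp_all add: field_simps)
  define piece where "piece j = periodize (window bump F 0 1 (j / M - 1/2) 1 M) (j / M - 1/2)" for j :: nat
  have F_sum: "F = (\<lambda>w. \<Sum>j<M. piece j w)"
    using F_eq_sum_periodize_window[OF M(2)] unfolding piece_def by (simp add: fun_eq_iff)
  have "C1c (piece j)" for j
    unfolding piece_def using M(1) c_ge_1 by (intro C1c_periodize_window_F) simp
  then have "X F = (\<Sum>j<M. X (piece j))"
    unfolding F_sum by (intro linear_C1c_sum) (use X in \<open>simp_all add: Calpha_def\<close>)
  then have "\<bar>X F\<bar> \<le> (\<Sum>j<M. \<bar>X (piece j)\<bar>)" by (simp add: sum_abs)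
  also have "\<dots> \<le> (\<Sum>j<M. (1 / c) powr \<alpha> * H / (c\<^sup>2 * \<kappa>))"
  proof (rule sum_mono)
    fix j assume "j \<in> {..<M}"
    then have "-1/2 \<le> j / M - 1/2" "j / M - 1/2 < 1/2" using M by (auto simp: field_simps)
    from abs_X_periodize_window_F_le[OF X f phi' \<kappa> this]
    show "\<bar>X (piece j)\<bar> \<le> (1 / c) powr \<alpha> * H / (c\<^sup>2 * \<kappa>)"
      unfolding piece_def M(1) H_def using c \<kappa> by (simp add: field_simps)
  qed
  also have "\<dots> = 8 * (17 + P) * c powr (- (1 + \<alpha>)) * (S0 + S1 + S2) * H"
    unfolding one_div_powr_eq[OF c] \<kappa>_def using c N M(1) by (simp add: power2_eq_square field_simps)
  finally show ?thesis unfolding H_def .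
qed

lemma abs_X_F_le:
  assumes "c \<in> \<nat>" and X: "X \<in> Calpha \<alpha>"
    and bounded: "bounded (f ` Omega0)" "bounded (pdt f ` Omega0)" "bounded (pdx f ` Omega0)"
    and phi': "\<forall>r>0. \<bar>deriv \<phi> r\<bar> \<le> P"
  shows "\<bar>X F\<bar> \<le> 8 * (17 + P) * c powr (- (1 + \<alpha>)) * C1norm_Omega0 f * holder_norm \<alpha> X (-1) 2"
proof -
  have f: "\<forall>t>0. \<forall>x. \<bar>f (t, x)\<bar> \<le> supnorm Omega0 f \<and> \<bar>pdt f (t, x)\<bar> \<le> supnorm Omega0 (pdt f) \<and>
      \<bar>pdx f (t, x)\<bar> \<le> supnorm Omega0 (pdx f)"
    using abs_f_le_supnorm[OF bounded] by blast
  show ?thesis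
  proof (cases "C1norm_Omega0 f = 0")
    case True
    then have "supnorm Omega0 f = 0"
      using f[rule_format, of 1 0] unfolding C1norm_Omega0_def by linarith
    then have "F = (\<lambda>w. 0)" using abs_F_le(1)[OF f phi'] by (simp add: fun_eq_iff)
    then show ?thesis using True X linear_C1c_zero by (simp add: Calpha_def)
  next
    case False
    then have "0 < C1norm_Omega0 f"
      using f[rule_format, of 1 0] unfolding C1norm_Omega0_def by linarith
    from abs_X_F_le_bounds[OF assms(1,2) f phi' this[unfolded C1norm_Omega0_def]]
    show ?thesis unfolding C1norm_Omega0_def .
  qed
qed

end

theorem lemma4p4:
  fixes \<phi> :: "real \<Rightarrow> real"
  assumes phi_smooth: "smooth_on {0<..} \<phi>"
    and phi_range: "\<forall>r>0. 0 \<le> \<phi> r \<and> \<phi> r \<le> 1"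
    and phi_supp: "\<forall>r>0. r \<notin> {1/16<..<1/4} \<longrightarrow> \<phi> r = 0"
    and phi_pou: "\<forall>r>0. ((\<lambda>n::int. \<phi> (2 powr of_int n * r)) has_sum 1) UNIV"
  shows "\<exists>C0::real. \<forall>\<alpha> (f :: real \<times> real \<Rightarrow> real) T1 X (n::nat).
     -1 < \<alpha> \<and> \<alpha> < 0 \<and>
     (\<forall>t>0. \<forall>x. f (t, x + 1) = f (t, x)) \<and>
     C1_on ({0<..} \<times> UNIV) f \<and>
     (\<forall>t x. t \<ge> T1 \<longrightarrow> f (t, x) = 0) \<and>
     bounded (f ` Omega0) \<and> bounded (pdt f ` Omega0) \<and> bounded (pdx f ` Omega0) \<and>
     X \<in> Calpha \<alpha>
     \<longrightarrow> \<bar>X (\<lambda>(t, x). if t > 0 then f (t, x) * \<phi> (2 ^ n * t) else 0)\<bar>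
         \<le> C0 * 2 powr (- real n * (1 + \<alpha>)) * C1norm_Omega0 f * holder_norm \<alpha> X (-1) 2"
proof -
  obtain P where P: "\<forall>r>0. \<bar>deriv \<phi> r\<bar> \<le> P"
    using smooth_on_deriv_bounded[OF phi_smooth _ phi_supp] phi_range by auto
  show ?thesis
  proof (intro exI[of _ "8 * (17 + P)"] allI impI, elim conjE)
    fix \<alpha> :: real and f :: "real \<times> real \<Rightarrow> real" and T1 X and n :: nat
    assume "\<forall>t>0. \<forall>x. f (t, x + 1) = f (t, x)" "C1_on ({0<..} \<times> UNIV) f"
      and bounded: "bounded (f ` Omega0)" "bounded (pdt f ` Omega0)" "bounded (pdx f ` Omega0)"
      and X: "X \<in> Calpha \<alpha>"
    then interpret dyadic_cutoff \<phi> f "2 ^ n"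
      using phi_smooth phi_range phi_supp by unfold_locales auto
    have "(\<lambda>(t, x). if t > 0 then f (t, x) * \<phi> (2 ^ n * t) else 0) = F"
      by (auto simp: F_def fun_eq_iff)
    moreover have "(2 ^ n) powr (- (1 + \<alpha>)) = 2 powr (- real n * (1 + \<alpha>))"
      by (simp add: powr_realpow[symmetric] powr_powr algebra_simps)
    ultimately show "\<bar>X (\<lambda>(t, x). if t > 0 then f (t, x) * \<phi> (2 ^ n * t) else 0)\<bar>
        \<le> 8 * (17 + P) * 2 powr (- real n * (1 + \<alpha>)) * C1norm_Omega0 f * holder_norm \<alpha> X (-1) 2"
      using abs_X_F_le[OF _ X bounded P] of_nat_in_Nats[of "2 ^ n"] by simp
  qed
qed

end
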